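(* Let $p$ be an odd prime, $\mathbb{F}$ a field of characteristic $p$, and $a,s$ natural numbers with $a<p$. For every set partition $\delta$ of $\{1,\ldots,as\}$ into $s$ sets of size $a$, there exists $g\in N_{S_{asp}}(R_{as})$ such that $K_\delta\cong\mathbb{F}\uparrow_{E_s^g}^C$ as $\mathbb{F}C$-modules.
   Context: For $j\geq1$ let $z_j=(p(j-1)+1,\ldots,pj)$ and $\mathcal{O}_j=\{p(j-1)+1,\ldots,pj\}$; $\sigma=z_1\cdots z_{as}$, $R_{as}=\langle\sigma\rangle$, $C=\langle z_1\rangle\times\cdots\times\langle z_{as}\rangle$. For $j\in\{1,\ldots,s\}$ let $\pi_j=z_jz_{j+s}z_{j+2s}\cdots z_{j+(a-1)s}$ and $E_s=\langle\pi_1\rangle\times\cdots\times\langle\pi_s\rangle\leq C$. $H^{(a^{sp})}$ is the $\mathbb{F}S_{asp}$-permutation module on set partitions of $\{1,\ldots,asp\}$ into $sp$ sets of size $a$; its Brauer quotient $H^{(a^{sp})}(R_{as})$ is identified with the span of the set partitions fixed by $R_{as}$. A fixed set partition $\omega$ has type $\delta=\{\delta_1,\ldots,\delta_s\}$ if there are sets $A_1,\ldots,A_s$ with $|A_i\cap\mathcal{O}_j|=1$ if $j\in\delta_i$ and $0$ otherwise, and $\omega=\{A_i\sigma^k:1\leq i\leq s,0\leq k\leq p-1\}$; $K_\delta$ is the $\mathbb{F}C$-submodule spanned by fixed set partitions of type $\delta$. *)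

theory Defs
  imports Main "HOL-Library.Disjoint_Sets" "HOL-Combinatorics.Permutations" "HOL-Computational_Algebra.Primes"
begin

text \<open>Permutations of {1..n} are functions nat => nat (composition = product).\<close>

definition zcyc :: "nat \<Rightarrow> nat \<Rightarrow> nat \<Rightarrow> nat" where
  "zcyc p j = (\<lambda>i. if p*(j-1)+1 \<le> i \<and> i < p*j then i+1
                    else if i = p*j then p*(j-1)+1 else i)"

definition Orb :: "nat \<Rightarrow> nat \<Rightarrow> nat set" where
  "Orb p j = {p*(j-1)+1..p*j}"

definition sigma :: "nat \<Rightarrow> nat \<Rightarrow> nat \<Rightarrow> nat \<Rightarrow> nat" where
  "sigma p a s = foldr (\<lambda>j f. zcyc p j \<circ> f) [1..<a*s+1] id"

definition Rgrp :: "nat \<Rightarrow> nat \<Rightarrow> nat \<Rightarrow> (nat \<Rightarrow> nat) set" where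
  "Rgrp p a s = range (\<lambda>k. sigma p a s ^^ k)"

definition Cgrp :: "nat \<Rightarrow> nat \<Rightarrow> nat \<Rightarrow> (nat \<Rightarrow> nat) set" where
  "Cgrp p a s = {foldr (\<lambda>j f. (zcyc p j ^^ k j) \<circ> f) [1..<a*s+1] id | k. True}"

definition pic :: "nat \<Rightarrow> nat \<Rightarrow> nat \<Rightarrow> nat \<Rightarrow> nat \<Rightarrow> nat" where
  "pic p a s j = foldr (\<lambda>i f. zcyc p (j + i*s) \<circ> f) [0..<a] id"

definition Egrp :: "nat \<Rightarrow> nat \<Rightarrow> nat \<Rightarrow> (nat \<Rightarrow> nat) set" where
  "Egrp p a s = {foldr (\<lambda>j f. (pic p a s j ^^ k j) \<circ> f) [1..<s+1] id | k. True}"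

definition Normaliser :: "nat \<Rightarrow> nat \<Rightarrow> nat \<Rightarrow> (nat \<Rightarrow> nat) set" where
  "Normaliser p a s = {g. g permutes {1..a*s*p} \<and>
      (\<lambda>x. g \<circ> x \<circ> inv g) ` Rgrp p a s = Rgrp p a s}"

definition conjg :: "(nat \<Rightarrow> nat) \<Rightarrow> (nat \<Rightarrow> nat) set \<Rightarrow> (nat \<Rightarrow> nat) set" where
  "conjg g H = (\<lambda>x. inv g \<circ> x \<circ> g) ` H"

definition setparts :: "nat \<Rightarrow> nat \<Rightarrow> nat \<Rightarrow> nat set set set" where
  "setparts n m a = {\<omega>. partition_on {1..n} \<omega> \<and> (\<forall>B\<in>\<omega>. card B = a) \<and> card \<omega> = m}"

definition set_act :: "(nat \<Rightarrow> nat) \<Rightarrow> nat set set \<Rightarrow> nat set set" where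
  "set_act g \<omega> = (\<lambda>B. g ` B) ` \<omega>"

definition fixedR :: "nat \<Rightarrow> nat \<Rightarrow> nat \<Rightarrow> nat set set \<Rightarrow> bool" where
  "fixedR p a s \<omega> = (\<forall>r\<in>Rgrp p a s. set_act r \<omega> = \<omega>)"

text \<open>Fixed set partition omega has type delta (the A_i indexed by the blocks of delta).\<close>
definition has_type :: "nat \<Rightarrow> nat \<Rightarrow> nat \<Rightarrow> nat set set \<Rightarrow> nat set set \<Rightarrow> bool" where
  "has_type p a s \<delta> \<omega> = (\<exists>A :: nat set \<Rightarrow> nat set.
      (\<forall>D\<in>\<delta>. \<forall>j\<in>{1..a*s}. card (A D \<inter> Orb p j) = (if j \<in> D then 1 else 0)) \<and>
      \<omega> = {(sigma p a s ^^ k) ` A D | D k. D \<in> \<delta> \<and> k < p})"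

text \<open>Basis of K_delta: fixed set partitions (of H^(a^{sp})) of type delta.\<close>
definition Xdelta :: "nat \<Rightarrow> nat \<Rightarrow> nat \<Rightarrow> nat set set \<Rightarrow> nat set set set" where
  "Xdelta p a s \<delta> = {\<omega> \<in> setparts (a*s*p) (s*p) a. fixedR p a s \<omega> \<and> has_type p a s \<delta> \<omega>}"

definition cosets :: "(nat \<Rightarrow> nat) set \<Rightarrow> (nat \<Rightarrow> nat) set \<Rightarrow> (nat \<Rightarrow> nat) set set" where
  "cosets G H = {(\<lambda>h. c \<circ> h) ` H | c. c \<in> G}"

definition coset_act :: "(nat \<Rightarrow> nat) \<Rightarrow> (nat \<Rightarrow> nat) set \<Rightarrow> (nat \<Rightarrow> nat) set" where
  "coset_act g K = (\<lambda>k. g \<circ> k) ` K"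

text \<open>Permutation module F[X]: F-valued functions supported on the finite G-set X
  (f corresponds to sum of f x * x), with g acting by push-forward (linear extension
  of x |-> g.x).\<close>
definition permmod :: "'x set \<Rightarrow> ('x \<Rightarrow> 'F::field) set" where
  "permmod X = {f. \<forall>x. x \<notin> X \<longrightarrow> f x = 0}"

definition pmact :: "('g \<Rightarrow> 'x \<Rightarrow> 'x) \<Rightarrow> 'x set \<Rightarrow> 'g \<Rightarrow> ('x \<Rightarrow> 'F::field) \<Rightarrow> ('x \<Rightarrow> 'F)" where
  "pmact act X g f = (\<lambda>y. \<Sum>x\<in>{x\<in>X. act g x = y}. f x)"

definition FG_iso :: "'F::field itself \<Rightarrow> 'g set \<Rightarrow> ('g \<Rightarrow> 'x \<Rightarrow> 'x) \<Rightarrow> 'x set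
                       \<Rightarrow> ('g \<Rightarrow> 'y \<Rightarrow> 'y) \<Rightarrow> 'y set \<Rightarrow> bool" where
  "FG_iso TYPE('F) G actX X actY Y = (\<exists>\<phi> :: ('x \<Rightarrow> 'F) \<Rightarrow> ('y \<Rightarrow> 'F).
      bij_betw \<phi> (permmod X) (permmod Y) \<and>
      (\<forall>f\<in>permmod X. \<forall>h\<in>permmod X. \<phi> (\<lambda>x. f x + h x) = (\<lambda>y. \<phi> f y + \<phi> h y)) \<and>
      (\<forall>c. \<forall>f\<in>permmod X. \<phi> (\<lambda>x. c * f x) = (\<lambda>y. c * \<phi> f y)) \<and>
      (\<forall>g\<in>G. \<forall>f\<in>permmod X. \<phi> (pmact actX X g f) = pmact actY Y g (\<phi> f)))"

end

theory Submission
  imports Defs "HOL-Number_Theory.Cong"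
begin

text \<open>
  Write the point of the orbit \<open>O\<^sub>j\<close> of \<open>z\<^sub>j\<close> with residue \<open>r\<close> as \<open>(j, r)\<close>, so that \<open>z\<^sub>j\<close> acts as
  \<open>r \<mapsto> r + 1\<close> on \<open>O\<^sub>j\<close>. Then \<open>C\<close> consists of the rotations \<open>(j, r) \<mapsto> (j, r + u j)\<close>, \<open>\<sigma>\<close> is the
  rotation with \<open>u = 1\<close> and \<open>E\<^sub>s\<close> consists of the rotations with \<open>u\<close> constant on the residue
  classes mod \<open>s\<close>. A permutation \<open>\<tau>\<close> of the orbits conjugates the rotation \<open>u\<close> into \<open>u \<circ> \<tau>\<close> and
  commutes with \<open>\<sigma>\<close>; choosing \<open>\<tau>\<close> to carry the blocks of \<open>\<delta>\<close> onto the residue classes mod \<open>s\<close>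
  gives \<open>g\<close> in the normaliser with \<open>E\<^sub>s\<^sup>g\<close> the rotations constant on the blocks of \<open>\<delta>\<close>.

  A fixed set partition of type \<open>\<delta>\<close> is determined by a residue \<open>l j\<close> in every orbit, \<open>A\<^sub>D\<close>
  being the transversal \<open>{(j, l j) | j \<in> D}\<close>, and \<open>l\<close>, \<open>l'\<close> give the same partition iff
  \<open>l - l'\<close> is constant mod \<open>p\<close> on every block of \<open>\<delta>\<close>. This is also exactly when the cosets of
  \<open>E\<^sub>s\<^sup>g\<close> through the rotations \<open>l\<close> and \<open>l'\<close> agree, and \<open>C\<close> acts on both sides by adding to \<open>l\<close>.
  So the basis of \<open>K\<^sub>\<delta>\<close> and \<open>C/E\<^sub>s\<^sup>g\<close> are isomorphic \<open>C\<close>-sets, which gives the module isomorphism.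
\<close>

section \<open>Isomorphisms of permutation modules\<close>

lemma bij_betw_image_fibre:
  assumes bij: "bij_betw \<beta> Y X"
    and closed: "\<And>y. y \<in> Y \<Longrightarrow> g' y \<in> Y"
    and equivariant: "\<And>y. y \<in> Y \<Longrightarrow> g (\<beta> y) = \<beta> (g' y)"
    and y: "y \<in> Y"
  shows "\<beta> ` {y' \<in> Y. g' y' = y} = {x \<in> X. g x = \<beta> y}"
proof (intro equalityI subsetI)
  fix x assume "x \<in> \<beta> ` {y' \<in> Y. g' y' = y}"
  then show "x \<in> {x \<in> X. g x = \<beta> y}" using equivariant bij_betwE[OF bij] by auto
next
  fix x assume x: "x \<in> {x \<in> X. g x = \<beta> y}"
  then obtain y' where y': "y' \<in> Y" "x = \<beta> y'" using bij by (auto simp: bij_betw_def)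
  then have "\<beta> (g' y') = \<beta> y" using x equivariant by simp
  then have "g' y' = y" using bij_betw_imp_inj_on[OF bij] closed[OF y'(1)] y by (auto dest: inj_onD)
  then show "x \<in> \<beta> ` {y' \<in> Y. g' y' = y}" using y' by blast
qed

lemma FG_iso_of_equivariant_bij:
  fixes \<beta> :: "'y \<Rightarrow> 'x"
  assumes bij: "bij_betw \<beta> Y X"
    and closed: "\<And>g y. g \<in> G \<Longrightarrow> y \<in> Y \<Longrightarrow> actY g y \<in> Y"
    and equivariant: "\<And>g y. g \<in> G \<Longrightarrow> y \<in> Y \<Longrightarrow> actX g (\<beta> y) = \<beta> (actY g y)"
  shows "FG_iso TYPE('F::field) G actX X actY Y"
proof -
  define \<phi> :: "('x \<Rightarrow> 'F) \<Rightarrow> 'y \<Rightarrow> 'F" where "\<phi> f = (\<lambda>y. if y \<in> Y then f (\<beta> y) else 0)" for f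
  define \<psi> :: "('y \<Rightarrow> 'F) \<Rightarrow> 'x \<Rightarrow> 'F" where "\<psi> h = (\<lambda>x. if x \<in> X then h (inv_into Y \<beta> x) else 0)" for h
  have bij_\<phi>: "bij_betw \<phi> (permmod X) (permmod Y)"
  proof (rule bij_betw_byWitness[where f' = \<psi>])
    have "inv_into Y \<beta> x \<in> Y" "\<beta> (inv_into Y \<beta> x) = x" if "x \<in> X" for x
    proof -
      have "x \<in> \<beta> ` Y" using that bij_betw_imp_surj_on[OF bij] by simp
      then show "inv_into Y \<beta> x \<in> Y" "\<beta> (inv_into Y \<beta> x) = x"
        by (rule inv_into_into, rule f_inv_into_f)
    qed
    then show "\<forall>f\<in>permmod X. \<psi> (\<phi> f) = f"
      by (auto simp: \<phi>_def \<psi>_def permmod_def)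
    have "\<beta> y \<in> X" "inv_into Y \<beta> (\<beta> y) = y" if "y \<in> Y" for y
      using bij_betwE[OF bij] bij_betw_inv_into_left[OF bij that] that by auto
    then show "\<forall>h\<in>permmod Y. \<phi> (\<psi> h) = h"
      by (auto simp: \<phi>_def \<psi>_def permmod_def)
  qed (auto simp: \<phi>_def \<psi>_def permmod_def)
  moreover have "\<forall>f\<in>permmod X. \<forall>h\<in>permmod X. \<phi> (\<lambda>x. f x + h x) = (\<lambda>y. \<phi> f y + \<phi> h y)"
    and "\<forall>c. \<forall>f\<in>permmod X. \<phi> (\<lambda>x. c * f x) = (\<lambda>y. c * \<phi> f y)"
    by (simp_all add: \<phi>_def fun_eq_iff)
  moreover have "\<phi> (pmact actX X g f) = pmact actY Y g (\<phi> f)" if g: "g \<in> G" for g f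
  proof
    fix y
    show "\<phi> (pmact actX X g f) y = pmact actY Y g (\<phi> f) y"
    proof (cases "y \<in> Y")
      case False
      then have no_fibre: "{y' \<in> Y. actY g y' = y} = {}" using closed[OF g] by auto
      show ?thesis unfolding \<phi>_def pmact_def no_fibre using False by simp
    next
      case True
      have fibre: "\<beta> ` {y' \<in> Y. actY g y' = y} = {x \<in> X. actX g x = \<beta> y}"
        using bij closed[OF g] equivariant[OF g] True by (rule bij_betw_image_fibre)
      have "inj_on \<beta> {y' \<in> Y. actY g y' = y}"
        using bij_betw_imp_inj_on[OF bij] by (rule inj_on_subset) auto
      then have "(\<Sum>x\<in>{x \<in> X. actX g x = \<beta> y}. f x) = (\<Sum>y'\<in>{y' \<in> Y. actY g y' = y}. f (\<beta> y'))"
        unfolding fibre[symmetric] by (rule sum.reindex[unfolded comp_def])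
      then show ?thesis using True by (simp add: \<phi>_def pmact_def)
    qed
  qed
  ultimately show ?thesis unfolding FG_iso_def by blast
qed

lemma FG_iso_of_parametrisations:
  fixes F :: "'a \<Rightarrow> 'x" and Q :: "'a \<Rightarrow> 'y"
  assumes X: "X = F ` A" and Y: "Y = Q ` A"
    and same_fibres: "\<And>a b. a \<in> A \<Longrightarrow> b \<in> A \<Longrightarrow> F a = F b \<longleftrightarrow> Q a = Q b"
    and act: "\<And>g a. g \<in> G \<Longrightarrow> a \<in> A \<Longrightarrow> \<exists>b\<in>A. actX g (F a) = F b \<and> actY g (Q a) = Q b"
  shows "FG_iso TYPE('F::field) G actX X actY Y"
proof -
  define \<beta> where "\<beta> y = F (SOME a. a \<in> A \<and> Q a = y)" for y
  have \<beta>: "\<beta> (Q a) = F a" if a: "a \<in> A" for a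
  proof -
    define a' where "a' = (SOME a'. a' \<in> A \<and> Q a' = Q a)"
    have "\<exists>a'. a' \<in> A \<and> Q a' = Q a" using a by blast
    then have "a' \<in> A \<and> Q a' = Q a" unfolding a'_def by (rule someI_ex)
    then show ?thesis using same_fibres[of a' a] a by (simp add: \<beta>_def flip: a'_def)
  qed
  show ?thesis
  proof (rule FG_iso_of_equivariant_bij[where \<beta> = \<beta>])
    show "bij_betw \<beta> Y X"
    proof (rule bij_betw_imageI)
      show "inj_on \<beta> Y"
      proof (rule inj_onI)
        fix y y' assume "y \<in> Y" "y' \<in> Y" and eq: "\<beta> y = \<beta> y'"
        then obtain a b where "a \<in> A" "b \<in> A" "y = Q a" "y' = Q b" unfolding Y by blast
        with eq show "y = y'" using \<beta> same_fibres[of a b] by simp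
      qed
      show "\<beta> ` Y = X" unfolding X Y image_image by (rule image_cong[OF refl \<beta>])
    qed
  next
    fix g y assume g: "g \<in> G" and "y \<in> Y"
    then obtain a where a: "a \<in> A" "y = Q a" unfolding Y by blast
    then obtain b where b: "b \<in> A" "actX g (F a) = F b" "actY g (Q a) = Q b" using act[OF g] by blast
    show "actY g y \<in> Y" using a b unfolding Y by simp
    show "actX g (\<beta> y) = \<beta> (actY g y)" using a b \<beta> by simp
  qed
qed

section \<open>Orbit coordinates\<close>

text \<open>\<open>orbit_point p j r\<close> is the point \<open>(j, r mod p)\<close> of \<open>O\<^sub>j = Orb p j\<close>.\<close>

definition orbit_point :: "nat \<Rightarrow> nat \<Rightarrow> nat \<Rightarrow> nat" where
  "orbit_point p j r = p * (j - 1) + r mod p + 1"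

definition orbit_index :: "nat \<Rightarrow> nat \<Rightarrow> nat" where
  "orbit_index p x = (x - 1) div p + 1"

definition orbit_residue :: "nat \<Rightarrow> nat \<Rightarrow> nat" where
  "orbit_residue p x = (x - 1) mod p"

lemma orbit_point_mod_arg [simp]: "orbit_point p j (r mod p) = orbit_point p j r"
  by (simp add: orbit_point_def)

lemma orbit_point_mod_add [simp]: "orbit_point p j (r mod p + t) = orbit_point p j (r + t)"
  by (simp add: orbit_point_def mod_add_left_eq)

lemma orbit_point_cong: "[r = r'] (mod p) \<Longrightarrow> orbit_point p j r = orbit_point p j r'"
  by (simp add: orbit_point_def cong_def)

lemma sum_mult_indicator:
  "finite A \<Longrightarrow> (\<Sum>j\<in>A. k j * (if i = j then 1 else 0)) = (if i \<in> A then k i else (0::nat))"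
  by (induction A rule: finite_induct) auto

definition orbit_rot :: "nat \<Rightarrow> nat \<Rightarrow> (nat \<Rightarrow> nat) \<Rightarrow> nat \<Rightarrow> nat" where
  "orbit_rot p N u x =
     (if x \<in> {1..p * N}
      then orbit_point p (orbit_index p x) (orbit_residue p x + u (orbit_index p x)) else x)"

definition orbit_perm :: "nat \<Rightarrow> nat \<Rightarrow> (nat \<Rightarrow> nat) \<Rightarrow> nat \<Rightarrow> nat" where
  "orbit_perm p N \<tau> x =
     (if x \<in> {1..p * N} then orbit_point p (\<tau> (orbit_index p x)) (orbit_residue p x) else x)"

lemma orbit_rot_outside: "x \<notin> {1..p * N} \<Longrightarrow> orbit_rot p N u x = x"
  unfolding orbit_rot_def by (rule if_not_P)

lemma orbit_perm_outside: "x \<notin> {1..p * N} \<Longrightarrow> orbit_perm p N \<tau> x = x"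
  unfolding orbit_perm_def by (rule if_not_P)

lemma residue_class_count:
  fixes a s i j :: nat
  assumes j: "j \<in> {1..s}" and i: "i \<in> {1..a * s}"
  shows "(\<Sum>t\<in>{0..<a}. if i = j + t * s then 1 else 0) = (if (i - 1) mod s + 1 = j then 1 else (0::nat))"
proof -
  have iff: "i = j + t * s \<longleftrightarrow> t = (i - 1) div s \<and> (i - 1) mod s + 1 = j" for t
  proof
    assume "i = j + t * s"
    moreover obtain r where r: "j = r + 1" using j by (metis add.commute atLeastAtMost_iff le_Suc_ex)
    ultimately have "i - 1 = r + t * s" "r < s" using j by auto
    then show "t = (i - 1) div s \<and> (i - 1) mod s + 1 = j" using r by simp
  next
    assume "t = (i - 1) div s \<and> (i - 1) mod s + 1 = j"
    then show "i = j + t * s" using i by (metis add.commute add.left_commute div_mult_mod_eq le_add_diff_inverse atLeastAtMost_iff)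
  qed
  have "i - 1 < a * s" using i by auto
  then have "(i - 1) div s < a" by (rule less_mult_imp_div_less)
  then show ?thesis by (simp add: iff sum.delta)
qed

context
  fixes p :: nat
  assumes p: "0 < p"
begin

lemma orbit_index_point [simp]: "1 \<le> j \<Longrightarrow> orbit_index p (orbit_point p j r) = j"
  and orbit_residue_point [simp]: "orbit_residue p (orbit_point p j r) = r mod p"
  using p by (simp_all add: orbit_point_def orbit_index_def orbit_residue_def)

lemma orbit_point_eq_iff:
  assumes "1 \<le> j" "1 \<le> j'"
  shows "orbit_point p j r = orbit_point p j' r' \<longleftrightarrow> j = j' \<and> [r = r'] (mod p)"
proof
  assume e: "orbit_point p j r = orbit_point p j' r'"
  then show "j = j' \<and> [r = r'] (mod p)"
    using assms orbit_index_point orbit_residue_point unfolding cong_def by metis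
qed (simp add: orbit_point_def cong_def)

lemma orbit_point_in: "j \<in> {1..N} \<Longrightarrow> orbit_point p j r \<in> {1..p * N}"
proof -
  assume j: "j \<in> {1..N}"
  then have "p * (j - 1) + p \<le> p * N"
    using mult_le_mono2[of j N p] by (cases j) auto
  moreover have "r mod p < p" using p by simp
  ultimately show ?thesis by (simp add: orbit_point_def)
qed

lemma orbit_point_cases:
  assumes "x \<in> {1..p * N}"
  obtains j r where "j \<in> {1..N}" "r < p" "x = orbit_point p j r"
proof
  show "orbit_index p x \<in> {1..N}"
    using assms p by (auto simp: orbit_index_def less_mult_imp_div_less mult.commute Suc_le_eq)
  show "orbit_residue p x < p" using p by (simp add: orbit_residue_def)
  show "x = orbit_point p (orbit_index p x) (orbit_residue p x)"
    using assms by (simp add: orbit_point_def orbit_index_def orbit_residue_def)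
qed

lemma Orb_eq: "1 \<le> j \<Longrightarrow> Orb p j = range (orbit_point p j)"
proof (intro equalityI subsetI)
  fix x assume "1 \<le> j" "x \<in> Orb p j"
  then have "x - 1 - p * (j - 1) < p" "x = orbit_point p j (x - 1 - p * (j - 1))"
    by (cases j; auto simp: Orb_def orbit_point_def)+
  then show "x \<in> range (orbit_point p j)" by blast
next
  fix x assume "1 \<le> j" "x \<in> range (orbit_point p j)"
  moreover have "r mod p < p" for r using p by simp
  ultimately show "x \<in> Orb p j"
    by (cases j) (auto simp: Orb_def orbit_point_def less_eq_Suc_le)
qed

lemma ext_orbit_points:
  assumes "\<And>x. x \<notin> {1..p * N} \<Longrightarrow> f x = g x"
    and "\<And>j r. j \<in> {1..N} \<Longrightarrow> r < p \<Longrightarrow> f (orbit_point p j r) = g (orbit_point p j r)"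
  shows "f = g"
proof
  fix x show "f x = g x"
    by (cases "x \<in> {1..p * N}") (auto elim: orbit_point_cases intro: assms)
qed

lemma orbit_rot_point: "j \<in> {1..N} \<Longrightarrow> orbit_rot p N u (orbit_point p j r) = orbit_point p j (r + u j)"
  using orbit_point_in[of j N r] by (simp add: orbit_rot_def)

lemma orbit_rot_comp: "orbit_rot p N u \<circ> orbit_rot p N v = orbit_rot p N (\<lambda>i. u i + v i)"
proof (rule ext_orbit_points[where N = N])
  show "(orbit_rot p N u \<circ> orbit_rot p N v) x = orbit_rot p N (\<lambda>i. u i + v i) x"
    if "x \<notin> {1..p * N}" for x
    using that by (simp add: orbit_rot_outside)
qed (simp add: orbit_rot_point orbit_point_in ac_simps)

lemma orbit_rot_eq_iff: "orbit_rot p N u = orbit_rot p N v \<longleftrightarrow> (\<forall>j\<in>{1..N}. [u j = v j] (mod p))"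
proof
  assume e: "orbit_rot p N u = orbit_rot p N v"
  show "\<forall>j\<in>{1..N}. [u j = v j] (mod p)"
  proof
    fix j assume "j \<in> {1..N}"
    then show "[u j = v j] (mod p)"
      using fun_cong[OF e, of "orbit_point p j 0"] by (simp add: orbit_rot_point orbit_point_eq_iff)
  qed
next
  assume "\<forall>j\<in>{1..N}. [u j = v j] (mod p)"
  then show "orbit_rot p N u = orbit_rot p N v"
    by (intro ext_orbit_points[where N = N])
       (simp_all add: orbit_rot_outside orbit_rot_point orbit_point_cong cong_add_lcancel_nat del: atLeastAtMost_iff)
qed

lemma orbit_rot_zero: "orbit_rot p N (\<lambda>_. 0) = id"
  by (rule ext_orbit_points[where N = N]) (simp_all add: orbit_rot_outside orbit_rot_point del: atLeastAtMost_iff)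

lemma orbit_rot_funpow: "orbit_rot p N u ^^ m = orbit_rot p N (\<lambda>i. m * u i)"
  by (induction m) (simp_all add: orbit_rot_zero orbit_rot_comp[symmetric])

lemma zcyc_outside: "1 \<le> j \<Longrightarrow> x \<notin> Orb p j \<Longrightarrow> zcyc p j x = x"
  using p by (cases j) (auto simp: zcyc_def Orb_def)

lemma zcyc_point: "1 \<le> j \<Longrightarrow> zcyc p j (orbit_point p j r) = orbit_point p j (r + 1)"
proof -
  assume j: "1 \<le> j"
  have pj: "p * j = p * (j - 1) + p" using j by (cases j) auto
  show ?thesis
  proof (cases "r mod p + 1 < p")
    case True
    then have "zcyc p j (orbit_point p j r) = orbit_point p j (r mod p + 1)"
      using pj by (simp add: zcyc_def orbit_point_def)
    then show ?thesis by (metis orbit_point_mod_add)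
  next
    case False
    moreover have "r mod p < p" using p by simp
    ultimately have "r mod p = p - 1" by linarith
    then have "orbit_point p j r = p * j" "(r + 1) mod p = 0"
      using p pj by (simp_all add: orbit_point_def mod_Suc)
    then show ?thesis
      using p by (simp add: zcyc_def orbit_point_def flip: orbit_point_mod_arg[of p j "r + 1"])
  qed
qed

lemma zcyc_eq_orbit_rot:
  assumes j: "j \<in> {1..N}"
  shows "zcyc p j = orbit_rot p N (\<lambda>i. if i = j then 1 else 0)"
proof (rule ext_orbit_points[where N = N])
  fix x assume x: "x \<notin> {1..p * N}"
  have "Orb p j \<subseteq> {1..p * N}" using j Orb_eq orbit_point_in by auto
  then have "x \<notin> Orb p j" using x by blast
  then show "zcyc p j x = orbit_rot p N (\<lambda>i. if i = j then 1 else 0) x"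
    using x j by (simp add: orbit_rot_outside zcyc_outside)
next
  fix j' r assume j': "j' \<in> {1..N}"
  show "zcyc p j (orbit_point p j' r) = orbit_rot p N (\<lambda>i. if i = j then 1 else 0) (orbit_point p j' r)"
  proof (cases "j' = j")
    case True then show ?thesis using j' by (simp add: zcyc_point orbit_rot_point)
  next
    case False
    then have "orbit_point p j' r \<notin> Orb p j" using j j' by (auto simp: Orb_eq orbit_point_eq_iff)
    then show ?thesis using False j j' by (simp add: zcyc_outside orbit_rot_point)
  qed
qed

lemma foldr_funpow_orbit_rot:
  assumes "distinct xs" and "\<forall>j\<in>set xs. F j = orbit_rot p N (v j)"
  shows "foldr (\<lambda>j f. F j ^^ k j \<circ> f) xs id = orbit_rot p N (\<lambda>i. \<Sum>j\<in>set xs. k j * v j i)"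
  using assms
  by (induction xs) (simp_all add: orbit_rot_zero orbit_rot_funpow orbit_rot_comp)

lemma foldr_zcyc_funpow: "foldr (\<lambda>j f. zcyc p j ^^ k j \<circ> f) [1..<N + 1] id = orbit_rot p N k"
proof -
  have "foldr (\<lambda>j f. zcyc p j ^^ k j \<circ> f) [1..<N + 1] id
      = orbit_rot p N (\<lambda>i. \<Sum>j\<in>set [1..<N + 1]. k j * (if i = j then 1 else 0))"
    by (rule foldr_funpow_orbit_rot) (auto intro: zcyc_eq_orbit_rot)
  also have "\<dots> = orbit_rot p N k"
  proof (subst orbit_rot_eq_iff, intro ballI)
    fix i assume "i \<in> {1..N}"
    then have "i \<in> set [1..<N + 1]" by auto
    then show "[(\<Sum>j\<in>set [1..<N + 1]. k j * (if i = j then 1 else 0)) = k i] (mod p)"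
      by (simp only: sum_mult_indicator[OF finite_set] if_True cong_refl)
  qed
  finally show ?thesis .
qed

lemma sigma_eq: "sigma p a s = orbit_rot p (a * s) (\<lambda>_. 1)"
  using foldr_zcyc_funpow[where N = "a * s" and k = "\<lambda>_. 1"] by (simp add: sigma_def)

lemma Rgrp_eq: "Rgrp p a s = range (\<lambda>k. orbit_rot p (a * s) (\<lambda>_. k))"
  by (simp add: Rgrp_def sigma_eq orbit_rot_funpow)

lemma Cgrp_eq: "Cgrp p a s = range (orbit_rot p (a * s))"
  unfolding Cgrp_def foldr_zcyc_funpow by auto

lemma pic_eq:
  assumes j: "j \<in> {1..s}"
  shows "pic p a s j = orbit_rot p (a * s) (\<lambda>i. if (i - 1) mod s + 1 = j then 1 else 0)"
proof -
  have "pic p a s j = foldr (\<lambda>t f. zcyc p (j + t * s) ^^ (\<lambda>_. 1::nat) t \<circ> f) [0..<a] id"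
    by (simp add: pic_def)
  also have "\<dots> = orbit_rot p (a * s) (\<lambda>i. \<Sum>t\<in>set [0..<a]. 1 * (if i = j + t * s then 1 else 0))"
  proof (rule foldr_funpow_orbit_rot)
    show "\<forall>t\<in>set [0..<a]. zcyc p (j + t * s) = orbit_rot p (a * s) (\<lambda>i. if i = j + t * s then 1 else 0)"
    proof
      fix t assume "t \<in> set [0..<a]"
      then have "j + t * s \<le> a * s" using j mult_le_mono1[of "t + 1" a s] by auto
      then show "zcyc p (j + t * s) = orbit_rot p (a * s) (\<lambda>i. if i = j + t * s then 1 else 0)"
        using j by (intro zcyc_eq_orbit_rot) auto
    qed
  qed simp
  also have "\<dots> = orbit_rot p (a * s) (\<lambda>i. if (i - 1) mod s + 1 = j then 1 else 0)"
  proof (subst orbit_rot_eq_iff, intro ballI)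
    fix i assume i: "i \<in> {1..a * s}"
    show "[(\<Sum>t\<in>set [0..<a]. 1 * (if i = j + t * s then 1 else 0)) = (if (i - 1) mod s + 1 = j then 1 else 0)] (mod p)"
      using residue_class_count[OF j i] by simp
  qed
  finally show ?thesis .
qed

lemma Egrp_eq: "Egrp p a s = range (\<lambda>k. orbit_rot p (a * s) (\<lambda>i. k ((i - 1) mod s + 1)))"
proof -
  have "foldr (\<lambda>j f. pic p a s j ^^ k j \<circ> f) [1..<s + 1] id
      = orbit_rot p (a * s) (\<lambda>i. k ((i - 1) mod s + 1))" for k
  proof -
    have "foldr (\<lambda>j f. pic p a s j ^^ k j \<circ> f) [1..<s + 1] id
        = orbit_rot p (a * s) (\<lambda>i. \<Sum>j\<in>set [1..<s + 1]. k j * (if (i - 1) mod s + 1 = j then 1 else 0))"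
      by (rule foldr_funpow_orbit_rot) (auto intro!: pic_eq simp del: One_nat_def)
    also have "\<dots> = orbit_rot p (a * s) (\<lambda>i. k ((i - 1) mod s + 1))"
    proof (subst orbit_rot_eq_iff, intro ballI)
      fix i assume "i \<in> {1..a * s}"
      then have "0 < s" by (cases s) auto
      then have "(i - 1) mod s + 1 \<in> set [1..<s + 1]" by (simp del: One_nat_def)
      then show "[(\<Sum>j\<in>set [1..<s + 1]. k j * (if (i - 1) mod s + 1 = j then 1 else 0)) = k ((i - 1) mod s + 1)] (mod p)"
        by (simp only: sum_mult_indicator[OF finite_set] if_True cong_refl)
    qed
    finally show ?thesis .
  qed
  then show ?thesis unfolding Egrp_def by auto
qed

lemma orbit_perm_point: "j \<in> {1..N} \<Longrightarrow> orbit_perm p N \<tau> (orbit_point p j r) = orbit_point p (\<tau> j) r"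
  using orbit_point_in[of j N r] p by (simp add: orbit_perm_def)

lemma orbit_perm_permutes:
  assumes \<tau>: "bij_betw \<tau> {1..N} {1..N}"
  shows "orbit_perm p N \<tau> permutes {1..p * N}"
proof (rule bij_imp_permutes)
  let ?\<tau>' = "inv_into {1..N} \<tau>"
  have \<tau>': "bij_betw ?\<tau>' {1..N} {1..N}" using \<tau> by (rule bij_betw_inv_into)
  have inverse: "orbit_perm p N \<sigma>' (orbit_perm p N \<sigma> x) = x"
    if \<sigma>: "bij_betw \<sigma> {1..N} {1..N}" "\<forall>j\<in>{1..N}. \<sigma>' (\<sigma> j) = j" and x: "x \<in> {1..p * N}"
    for \<sigma> \<sigma>' x
  proof -
    obtain j r where j: "j \<in> {1..N}" and "x = orbit_point p j r" using orbit_point_cases[OF x] .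
    moreover have "\<sigma> j \<in> {1..N}" using bij_betwE[OF \<sigma>(1)] j by blast
    ultimately show ?thesis using \<sigma>(2) by (simp add: orbit_perm_point)
  qed
  show "bij_betw (orbit_perm p N \<tau>) {1..p * N} {1..p * N}"
  proof (rule bij_betw_byWitness[where f' = "orbit_perm p N ?\<tau>'"])
    show "\<forall>x\<in>{1..p * N}. orbit_perm p N ?\<tau>' (orbit_perm p N \<tau> x) = x"
      using inverse[OF \<tau>] \<tau> by (simp add: bij_betw_inv_into_left)
    show "\<forall>x\<in>{1..p * N}. orbit_perm p N \<tau> (orbit_perm p N ?\<tau>' x) = x"
      using inverse[OF \<tau>'] \<tau> by (simp add: bij_betw_inv_into_right)
    have "orbit_perm p N \<sigma> ` {1..p * N} \<subseteq> {1..p * N}" if "bij_betw \<sigma> {1..N} {1..N}" for \<sigma>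
    proof
      fix y assume "y \<in> orbit_perm p N \<sigma> ` {1..p * N}"
      then obtain x where x: "x \<in> {1..p * N}" "y = orbit_perm p N \<sigma> x" by blast
      obtain j r where j: "j \<in> {1..N}" and "x = orbit_point p j r" using orbit_point_cases[OF x(1)] .
      moreover have "\<sigma> j \<in> {1..N}" using bij_betwE[OF that] j by blast
      ultimately show "y \<in> {1..p * N}" using x(2) orbit_point_in by (metis orbit_perm_point)
    qed
    from this[OF \<tau>] this[OF \<tau>'] show "orbit_perm p N \<tau> ` {1..p * N} \<subseteq> {1..p * N}"
      "orbit_perm p N ?\<tau>' ` {1..p * N} \<subseteq> {1..p * N}" .
  qed
qed (rule orbit_perm_outside)

lemma orbit_rot_comp_orbit_perm:
  assumes "\<tau> ` {1..N} \<subseteq> {1..N}"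
  shows "orbit_rot p N u \<circ> orbit_perm p N \<tau> = orbit_perm p N \<tau> \<circ> orbit_rot p N (u \<circ> \<tau>)"
proof (rule ext_orbit_points[where N = N])
  fix x assume "x \<notin> {1..p * N}"
  then show "(orbit_rot p N u \<circ> orbit_perm p N \<tau>) x = (orbit_perm p N \<tau> \<circ> orbit_rot p N (u \<circ> \<tau>)) x"
    by (simp add: orbit_rot_outside orbit_perm_outside)
next
  fix j r assume j: "j \<in> {1..N}"
  then have "\<tau> j \<in> {1..N}" using assms by blast
  then show "(orbit_rot p N u \<circ> orbit_perm p N \<tau>) (orbit_point p j r)
      = (orbit_perm p N \<tau> \<circ> orbit_rot p N (u \<circ> \<tau>)) (orbit_point p j r)"
    using j by (simp add: orbit_perm_point orbit_rot_point)
qed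

lemma conj_orbit_rot:
  assumes "bij_betw \<tau> {1..N} {1..N}"
  shows "inv (orbit_perm p N \<tau>) \<circ> orbit_rot p N u \<circ> orbit_perm p N \<tau> = orbit_rot p N (u \<circ> \<tau>)"
proof -
  let ?g = "orbit_perm p N \<tau>"
  have "inv ?g \<circ> ?g = id" using permutes_inv_o(2)[OF orbit_perm_permutes[OF assms]] .
  moreover have "orbit_rot p N u \<circ> ?g = ?g \<circ> orbit_rot p N (u \<circ> \<tau>)"
    using assms by (intro orbit_rot_comp_orbit_perm) (simp add: bij_betw_def)
  ultimately show ?thesis by (metis comp_assoc id_comp)
qed

end

section \<open>Relabelling the orbits along the blocks of \<open>\<delta>\<close>\<close>

definition block_of :: "'a set set \<Rightarrow> 'a \<Rightarrow> 'a set" where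
  "block_of P x = (THE D. D \<in> P \<and> x \<in> D)"

lemma block_of_eq: "partition_on A P \<Longrightarrow> D \<in> P \<Longrightarrow> x \<in> D \<Longrightarrow> block_of P x = D"
  unfolding block_of_def by (rule the_equality) (use disjointD[OF partition_onD2] in blast)+

lemma block_of_in: "partition_on A P \<Longrightarrow> x \<in> A \<Longrightarrow> block_of P x \<in> P \<and> x \<in> block_of P x"
  by (metis block_of_eq partition_onD1 UnionE)

text \<open>
  Conjugation by \<open>orbit_perm\<close> of such a \<open>\<tau>\<close> turns the residue classes mod \<open>s\<close> defining \<open>E\<^sub>s\<close>
  into the blocks of \<open>\<delta>\<close> (\<open>conjg_Egrp_block_const\<close>).
\<close>

lemma obtain_block_labelling:
  fixes a s :: nat
  assumes P: "partition_on {1..a * s} \<delta>" and card_block: "\<forall>D\<in>\<delta>. card D = a" and card_\<delta>: "card \<delta> = s"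
  obtains \<tau> where "bij_betw \<tau> {1..a * s} {1..a * s}"
    and "\<forall>i\<in>{1..a * s}. \<forall>i'\<in>{1..a * s}.
           (\<tau> i - 1) mod s = (\<tau> i' - 1) mod s \<longleftrightarrow> block_of \<delta> i = block_of \<delta> i'"
proof -
  have "finite \<delta>" using P by (metis finite_atLeastAtMost finite_elements)
  then obtain e where e: "bij_betw e \<delta> {0..<s}" using ex_bij_betw_finite_nat card_\<delta> by blast
  have "\<exists>f. bij_betw f D {0..<a}" if "D \<in> \<delta>" for D
    using that card_block ex_bij_betw_finite_nat partition_onD1[OF P] that
    by (metis Union_upper finite_atLeastAtMost rev_finite_subset)
  then obtain f where f: "\<forall>D\<in>\<delta>. bij_betw (f D) D {0..<a}" by metis
  define \<tau> where "\<tau> i = f (block_of \<delta> i) i * s + e (block_of \<delta> i) + 1" for i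
  have blk: "block_of \<delta> i \<in> \<delta>" "i \<in> block_of \<delta> i" if "i \<in> {1..a * s}" for i
    using block_of_in[OF P that] by auto
  have f_lt: "f (block_of \<delta> i) i < a" and e_lt: "e (block_of \<delta> i) < s" if "i \<in> {1..a * s}" for i
    using bij_betwE[OF f[rule_format, OF blk(1)[OF that]]] bij_betwE[OF e] blk[OF that] by auto
  have \<tau>_div: "(\<tau> i - 1) div s = f (block_of \<delta> i) i"
    and \<tau>_mod: "(\<tau> i - 1) mod s = e (block_of \<delta> i)" if "i \<in> {1..a * s}" for i
    using e_lt[OF that] by (simp_all add: \<tau>_def)
  have same_block: "(\<tau> i - 1) mod s = (\<tau> i' - 1) mod s \<longleftrightarrow> block_of \<delta> i = block_of \<delta> i'"
    if "i \<in> {1..a * s}" "i' \<in> {1..a * s}" for i i'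
    using that \<tau>_mod blk bij_betw_imp_inj_on[OF e] by (metis inj_onD)
  have "\<tau> ` {1..a * s} \<subseteq> {1..a * s}"
  proof
    fix x assume "x \<in> \<tau> ` {1..a * s}"
    then obtain i where i: "i \<in> {1..a * s}" and x: "x = \<tau> i" by blast
    have "(f (block_of \<delta> i) i + 1) * s \<le> a * s" using f_lt[OF i] by (intro mult_le_mono1) simp
    then show "x \<in> {1..a * s}" using e_lt[OF i] by (simp add: x \<tau>_def)
  qed
  moreover have "inj_on \<tau> {1..a * s}"
  proof (rule inj_onI)
    fix i i' assume i: "i \<in> {1..a * s}" and i': "i' \<in> {1..a * s}" and eq: "\<tau> i = \<tau> i'"
    then have b: "block_of \<delta> i = block_of \<delta> i'" using same_block by metis
    then have "f (block_of \<delta> i) i = f (block_of \<delta> i) i'" using \<tau>_div[OF i] \<tau>_div[OF i'] eq by simp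
    then show "i = i'" using f blk[OF i] blk[OF i'] b by (metis bij_betw_imp_inj_on inj_onD)
  qed
  ultimately have "bij_betw \<tau> {1..a * s} {1..a * s}"
    by (simp add: bij_betw_def endo_inj_surj)
  with same_block show thesis using that by blast
qed

definition block_const :: "nat \<Rightarrow> nat set set \<Rightarrow> (nat \<Rightarrow> nat) set" where
  "block_const p \<delta> = {u. \<forall>D\<in>\<delta>. \<forall>i\<in>D. \<forall>j\<in>D. [u i = u j] (mod p)}"

lemma orbit_perm_normalises_Rgrp:
  assumes p: "0 < p" and \<tau>: "bij_betw \<tau> {1..a * s} {1..a * s}"
  shows "orbit_perm p (a * s) \<tau> \<in> Normaliser p a s"
proof -
  let ?g = "orbit_perm p (a * s) \<tau>"
  have perm: "?g permutes {1..a * s * p}"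
    using orbit_perm_permutes[OF p \<tau>] by (simp add: mult.commute)
  have "?g \<circ> x \<circ> inv ?g = x" if "x \<in> Rgrp p a s" for x
  proof -
    obtain k where x: "x = orbit_rot p (a * s) (\<lambda>_. k)" using \<open>x \<in> Rgrp p a s\<close> Rgrp_eq[OF p] by auto
    have "x \<circ> ?g = ?g \<circ> x"
      using orbit_rot_comp_orbit_perm[OF p, of \<tau> "a * s" "\<lambda>_. k"] \<tau> by (simp add: x bij_betw_def comp_def)
    then have "?g \<circ> x \<circ> inv ?g = x \<circ> (?g \<circ> inv ?g)" by (metis comp_assoc)
    then show ?thesis using permutes_inv_o(1)[OF perm] by simp
  qed
  then have "(\<lambda>x. ?g \<circ> x \<circ> inv ?g) ` Rgrp p a s = Rgrp p a s" by simp
  with perm show ?thesis by (simp add: Normaliser_def)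
qed

lemma range_orbit_rot_comp_eq_block_const:
  assumes p: "0 < p" and P: "partition_on {1..N} \<delta>"
    and labelling: "\<forall>i\<in>{1..N}. \<forall>i'\<in>{1..N}. label i = label i' \<longleftrightarrow> block_of \<delta> i = block_of \<delta> i'"
  shows "range (\<lambda>k. orbit_rot p N (k \<circ> label)) = orbit_rot p N ` block_const p \<delta>"
proof (intro equalityI subsetI)
  fix x assume "x \<in> range (\<lambda>k. orbit_rot p N (k \<circ> label))"
  then obtain k where x: "x = orbit_rot p N (k \<circ> label)" by blast
  have "k \<circ> label \<in> block_const p \<delta>"
    unfolding block_const_def
  proof (intro CollectI ballI)
    fix D i j assume "D \<in> \<delta>" "i \<in> D" "j \<in> D"
    moreover from this have "i \<in> {1..N}" "j \<in> {1..N}" using partition_onD1[OF P] by auto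
    ultimately have "label i = label j" using labelling block_of_eq[OF P] by metis
    then show "[(k \<circ> label) i = (k \<circ> label) j] (mod p)" by simp
  qed
  then show "x \<in> orbit_rot p N ` block_const p \<delta>" using x by blast
next
  fix x assume "x \<in> orbit_rot p N ` block_const p \<delta>"
  then obtain u where u: "u \<in> block_const p \<delta>" and x: "x = orbit_rot p N u" by blast
  define k where "k m = u (SOME i. i \<in> {1..N} \<and> label i = m)" for m
  have "orbit_rot p N u = orbit_rot p N (k \<circ> label)"
  proof (subst orbit_rot_eq_iff[OF p], intro ballI)
    fix i assume i: "i \<in> {1..N}"
    define i' where "i' = (SOME i'. i' \<in> {1..N} \<and> label i' = label i)"
    have "\<exists>i'. i' \<in> {1..N} \<and> label i' = label i" using i by blast
    then have "i' \<in> {1..N} \<and> label i' = label i"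
      unfolding i'_def by (rule someI_ex)
    then have i': "i' \<in> {1..N}" "label i' = label i" by auto
    then have "block_of \<delta> i' = block_of \<delta> i" using labelling i by simp
    then have "block_of \<delta> i \<in> \<delta>" "i \<in> block_of \<delta> i" "i' \<in> block_of \<delta> i"
      using block_of_in[OF P i] block_of_in[OF P i'(1)] by auto
    then have "[u i = u i'] (mod p)" using u unfolding block_const_def by blast
    then show "[u i = (k \<circ> label) i] (mod p)" by (simp add: k_def i'_def)
  qed
  then show "x \<in> range (\<lambda>k. orbit_rot p N (k \<circ> label))" using x by blast
qed

lemma conjg_Egrp_block_const:
  fixes a s :: nat
  assumes p: "0 < p" and P: "partition_on {1..a * s} \<delta>" and \<tau>: "bij_betw \<tau> {1..a * s} {1..a * s}"
    and labelling: "\<forall>i\<in>{1..a * s}. \<forall>i'\<in>{1..a * s}.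
           (\<tau> i - 1) mod s = (\<tau> i' - 1) mod s \<longleftrightarrow> block_of \<delta> i = block_of \<delta> i'"
  shows "conjg (orbit_perm p (a * s) \<tau>) (Egrp p a s) = orbit_rot p (a * s) ` block_const p \<delta>"
proof -
  let ?N = "a * s" and ?label = "\<lambda>i. (\<tau> i - 1) mod s + 1"
  have "conjg (orbit_perm p ?N \<tau>) (Egrp p a s) = range (\<lambda>k. orbit_rot p ?N (k \<circ> ?label))"
    unfolding conjg_def Egrp_eq[OF p] image_image conj_orbit_rot[OF p \<tau>] by (simp add: comp_def)
  also have "\<dots> = orbit_rot p ?N ` block_const p \<delta>"
    using labelling by (intro range_orbit_rot_comp_eq_block_const[OF p P]) simp
  finally show ?thesis .
qed

section \<open>Fixed set partitions of type \<open>\<delta>\<close> and cosets of \<open>E\<^sub>s\<^sup>g\<close>\<close>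

definition transversal :: "nat \<Rightarrow> (nat \<Rightarrow> nat) \<Rightarrow> nat set \<Rightarrow> nat set" where
  "transversal p l D = (\<lambda>j. orbit_point p j (l j)) ` D"

text \<open>The partition \<open>{A\<^sub>D \<sigma>\<^sup>k}\<close> of the paper with \<open>A\<^sub>D = transversal p l D\<close>.\<close>

definition typed_partition :: "nat \<Rightarrow> nat set set \<Rightarrow> (nat \<Rightarrow> nat) \<Rightarrow> nat set set" where
  "typed_partition p \<delta> l = (\<lambda>(D, k). transversal p (\<lambda>j. l j + k) D) ` (\<delta> \<times> {..<p})"

definition block_shifted :: "nat \<Rightarrow> nat set set \<Rightarrow> (nat \<Rightarrow> nat) \<Rightarrow> (nat \<Rightarrow> nat) \<Rightarrow> bool" where
  "block_shifted p \<delta> l l' \<longleftrightarrow> (\<forall>D\<in>\<delta>. \<exists>k. \<forall>j\<in>D. [l j = l' j + k] (mod p))"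

text \<open>The coset of \<open>E\<^sub>s\<^sup>g = orbit_rot p N ` block_const p \<delta>\<close> through the rotation \<open>l\<close>.\<close>

definition rot_coset :: "nat \<Rightarrow> nat \<Rightarrow> nat set set \<Rightarrow> (nat \<Rightarrow> nat) \<Rightarrow> (nat \<Rightarrow> nat) set" where
  "rot_coset p N \<delta> l = (\<lambda>h. orbit_rot p N l \<circ> h) ` (orbit_rot p N ` block_const p \<delta>)"

lemma transversal_cong: "(\<And>j. j \<in> D \<Longrightarrow> [l j = l' j] (mod p)) \<Longrightarrow> transversal p l D = transversal p l' D"
  unfolding transversal_def by (rule image_cong[OF refl]) (simp add: orbit_point_cong)

lemma block_shifted_sym:
  assumes "0 < p" "block_shifted p \<delta> l l'"
  shows "block_shifted p \<delta> l' l"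
  unfolding block_shifted_def
proof
  fix D assume "D \<in> \<delta>"
  then obtain k where k: "\<forall>j\<in>D. [l j = l' j + k] (mod p)" using assms(2) block_shifted_def by blast
  \<comment> \<open>\<open>(p - 1) * k\<close> is an inverse of \<open>k\<close> modulo \<open>p\<close>.\<close>
  have "[l' j = l j + (p - 1) * k] (mod p)" if "j \<in> D" for j
  proof -
    have "[l j + (p - 1) * k = l' j + k + (p - 1) * k] (mod p)"
      using k that by (intro cong_add) auto
    also have "l' j + k + (p - 1) * k = l' j + p * k" using assms(1) by (cases p) auto
    also have "[l' j + p * k = l' j] (mod p)" by (simp add: cong_def)
    finally show ?thesis by (rule cong_sym)
  qed
  then show "\<exists>k. \<forall>j\<in>D. [l' j = l j + k] (mod p)" by blast
qed

lemma eq_transversal_if_card_Orb: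
  assumes p: "0 < p" and A: "A \<subseteq> {1..p * N}" and D: "D \<subseteq> {1..N}"
    and card_Orb: "\<forall>j\<in>{1..N}. card (A \<inter> Orb p j) = (if j \<in> D then 1 else 0)"
  shows "A = transversal p (\<lambda>j. orbit_residue p (the_elem (A \<inter> Orb p j))) D"
proof -
  have point: "A \<inter> Orb p j = {orbit_point p j (orbit_residue p (the_elem (A \<inter> Orb p j)))}"
    if j: "j \<in> D" for j
  proof -
    have "card (A \<inter> Orb p j) = 1" using card_Orb j D by auto
    then obtain x where x: "A \<inter> Orb p j = {x}" by (rule card_1_singletonE)
    moreover have "1 \<le> j" using j D by auto
    moreover from this obtain r where "x = orbit_point p j r" using x Orb_eq[OF p] by blast
    ultimately show ?thesis using p by simp
  qed
  show ?thesis
  proof (intro equalityI subsetI)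
    fix y assume y: "y \<in> A"
    then obtain j r where j: "j \<in> {1..N}" and yj: "y = orbit_point p j r"
      using A orbit_point_cases[OF p] by blast
    then have "y \<in> A \<inter> Orb p j" using y Orb_eq[OF p] by auto
    moreover have "finite (A \<inter> Orb p j)" by (simp add: Orb_def)
    ultimately have "j \<in> D" using card_Orb j by (metis card_0_eq empty_iff)
    then show "y \<in> transversal p (\<lambda>j. orbit_residue p (the_elem (A \<inter> Orb p j))) D"
      using point \<open>y \<in> A \<inter> Orb p j\<close> by (auto simp: transversal_def)
  next
    fix y assume "y \<in> transversal p (\<lambda>j. orbit_residue p (the_elem (A \<inter> Orb p j))) D"
    then show "y \<in> A" using point by (auto simp: transversal_def)
  qed
qed

context
  fixes p a s :: nat and \<delta> :: "nat set set"
  assumes p: "0 < p" and P: "partition_on {1..a * s} \<delta>"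
begin

lemma block_subset: "D \<in> \<delta> \<Longrightarrow> D \<subseteq> {1..a * s}"
  using partition_onD1[OF P] by blast

lemma mem_transversal:
  assumes "D \<in> \<delta>" "1 \<le> j"
  shows "orbit_point p j r \<in> transversal p l D \<longleftrightarrow> j \<in> D \<and> [r = l j] (mod p)"
proof
  assume "orbit_point p j r \<in> transversal p l D"
  then obtain j' where "j' \<in> D" "orbit_point p j r = orbit_point p j' (l j')"
    by (auto simp: transversal_def)
  moreover have "1 \<le> j'" using block_subset[OF assms(1)] \<open>j' \<in> D\<close> by auto
  ultimately show "j \<in> D \<and> [r = l j] (mod p)" using assms(2) by (simp add: orbit_point_eq_iff[OF p])
next
  assume "j \<in> D \<and> [r = l j] (mod p)"
  then show "orbit_point p j r \<in> transversal p l D"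
    unfolding transversal_def by (metis image_eqI orbit_point_cong)
qed

lemma transversal_subset: "D \<in> \<delta> \<Longrightarrow> transversal p l D \<subseteq> {1..p * (a * s)}"
  unfolding transversal_def by (rule image_subsetI, rule orbit_point_in[OF p]) (use block_subset in blast)

lemma orbit_rot_transversal:
  "D \<in> \<delta> \<Longrightarrow> orbit_rot p (a * s) c ` transversal p l D = transversal p (\<lambda>j. c j + l j) D"
  using block_subset by (force simp: transversal_def image_image orbit_rot_point[OF p] add.commute intro: image_cong)

lemma set_act_typed_partition:
  "set_act (orbit_rot p (a * s) c) (typed_partition p \<delta> l) = typed_partition p \<delta> (\<lambda>j. c j + l j)"
  unfolding set_act_def typed_partition_def image_image
  by (rule image_cong[OF refl]) (clarsimp simp: orbit_rot_transversal add.assoc)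

lemma transversals_meet:
  assumes "D \<in> \<delta>" "D' \<in> \<delta>" "k < p" "k' < p"
    and "x \<in> transversal p (\<lambda>j. l j + k) D" "x \<in> transversal p (\<lambda>j. l j + k') D'"
  shows "D = D' \<and> k = k'"
proof -
  obtain j where j: "j \<in> D" "x = orbit_point p j (l j + k)"
    using assms(5) by (auto simp: transversal_def)
  then have "j \<in> D'" "[l j + k = l j + k'] (mod p)"
    using assms(2,6) block_subset[OF assms(1)] mem_transversal by auto
  then show ?thesis
    using assms(3,4) j(1) disjointD[OF partition_onD2[OF P] assms(1,2)]
    by (auto simp: cong_add_lcancel_nat intro: cong_less_modulus_unique_nat)
qed

lemma typed_partition_mono:
  assumes "block_shifted p \<delta> l l'"
  shows "typed_partition p \<delta> l \<subseteq> typed_partition p \<delta> l'"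
proof
  fix B assume "B \<in> typed_partition p \<delta> l"
  then obtain D m where D: "D \<in> \<delta>" and "m < p" and B: "B = transversal p (\<lambda>j. l j + m) D"
    unfolding typed_partition_def by auto
  obtain k where k: "\<forall>j\<in>D. [l j = l' j + k] (mod p)" using assms D by (auto simp: block_shifted_def)
  have "B = transversal p (\<lambda>j. l' j + (k + m) mod p) D"
  proof (unfold B, intro transversal_cong)
    fix j assume "j \<in> D"
    then have "[l j + m = l' j + k + m] (mod p)" using k by (intro cong_add) auto
    also have "[l' j + k + m = l' j + (k + m) mod p] (mod p)" by (simp add: cong_def mod_add_right_eq add.assoc)
    finally show "[l j + m = l' j + (k + m) mod p] (mod p)" .
  qed
  moreover have "(k + m) mod p < p" using p by simp
  ultimately show "B \<in> typed_partition p \<delta> l'"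
    using D unfolding typed_partition_def by blast
qed

lemma typed_partition_eq_iff: "typed_partition p \<delta> l = typed_partition p \<delta> l' \<longleftrightarrow> block_shifted p \<delta> l l'"
proof
  assume eq: "typed_partition p \<delta> l = typed_partition p \<delta> l'"
  show "block_shifted p \<delta> l l'" unfolding block_shifted_def
  proof
    fix D assume D: "D \<in> \<delta>"
    have "transversal p (\<lambda>j. l j + 0) D \<in> typed_partition p \<delta> l"
      using D p unfolding typed_partition_def by blast
    then have "transversal p l D \<in> typed_partition p \<delta> l'" by (simp add: eq)
    then obtain D' k where D': "D' \<in> \<delta>" and tr: "transversal p l D = transversal p (\<lambda>j. l' j + k) D'"
      unfolding typed_partition_def by auto
    have "[l j = l' j + k] (mod p)" if "j \<in> D" for j
    proof -
      have "orbit_point p j (l j) \<in> transversal p l D" using that by (simp add: transversal_def)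
      then show ?thesis using tr D' block_subset[OF D] that mem_transversal by auto
    qed
    then show "\<exists>k. \<forall>j\<in>D. [l j = l' j + k] (mod p)" by blast
  qed
qed (use typed_partition_mono block_shifted_sym[OF p] in blast)

lemma typed_partition_alt:
  "typed_partition p \<delta> l = {(sigma p a s ^^ k) ` transversal p l D | D k. D \<in> \<delta> \<and> k < p}"
proof -
  have sigma_transversal: "(sigma p a s ^^ k) ` transversal p l D = transversal p (\<lambda>j. l j + k) D"
    if "D \<in> \<delta>" for D k
    using orbit_rot_transversal[OF that] by (simp add: sigma_eq[OF p] orbit_rot_funpow[OF p] add.commute)
  show ?thesis unfolding typed_partition_def
  proof (intro equalityI subsetI)
    fix B assume "B \<in> (\<lambda>(D, k). transversal p (\<lambda>j. l j + k) D) ` (\<delta> \<times> {..<p})"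
    then obtain D k where "D \<in> \<delta>" "k < p" "B = transversal p (\<lambda>j. l j + k) D" by auto
    then show "B \<in> {(sigma p a s ^^ k) ` transversal p l D | D k. D \<in> \<delta> \<and> k < p}"
      using sigma_transversal by blast
  next
    fix B assume "B \<in> {(sigma p a s ^^ k) ` transversal p l D | D k. D \<in> \<delta> \<and> k < p}"
    then obtain D k where "D \<in> \<delta>" "k < p" "B = transversal p (\<lambda>j. l j + k) D"
      using sigma_transversal by blast
    then show "B \<in> (\<lambda>(D, k). transversal p (\<lambda>j. l j + k) D) ` (\<delta> \<times> {..<p})" by auto
  qed
qed

lemma typed_partition_union: "\<Union> (typed_partition p \<delta> l) = {1..p * (a * s)}"
proof (intro equalityI subsetI)
  fix x assume "x \<in> \<Union> (typed_partition p \<delta> l)"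
  then show "x \<in> {1..p * (a * s)}"
    using transversal_subset unfolding typed_partition_def by blast
next
  fix x assume "x \<in> {1..p * (a * s)}"
  then obtain j r where j: "j \<in> {1..a * s}" and x: "x = orbit_point p j r"
    using orbit_point_cases[OF p] by blast
  let ?D = "block_of \<delta> j" and ?k = "(r + (p - 1) * l j) mod p"
  have "[l j + ?k = r + p * l j] (mod p)"
    using p by (cases p) (simp_all add: cong_def mod_add_right_eq algebra_simps)
  then have "[r = l j + ?k] (mod p)" by (simp add: cong_def)
  then have "x \<in> transversal p (\<lambda>j. l j + ?k) ?D"
    using block_of_in[OF P j] j x mem_transversal by auto
  moreover have "transversal p (\<lambda>j. l j + ?k) ?D \<in> typed_partition p \<delta> l"
    using block_of_in[OF P j] p unfolding typed_partition_def by auto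
  ultimately show "x \<in> \<Union> (typed_partition p \<delta> l)" by blast
qed

lemma transversal_nonempty: "D \<in> \<delta> \<Longrightarrow> transversal p l D \<noteq> {}"
  using partition_onD3[OF P] by (auto simp: transversal_def)

lemma card_transversal: "D \<in> \<delta> \<Longrightarrow> card (transversal p l D) = card D"
  unfolding transversal_def
proof (rule card_image, rule inj_onI)
  fix i j assume D: "D \<in> \<delta>" and "i \<in> D" "j \<in> D" and eq: "orbit_point p i (l i) = orbit_point p j (l j)"
  then have "1 \<le> i" "1 \<le> j" using block_subset[OF D] by auto
  then show "i = j" using eq orbit_point_eq_iff[OF p] by blast
qed

lemma typed_partition_partition_on: "partition_on {1..p * (a * s)} (typed_partition p \<delta> l)"
proof (rule partition_onI)
  show "\<Union> (typed_partition p \<delta> l) = {1..p * (a * s)}" by (rule typed_partition_union)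
  show "{} \<notin> typed_partition p \<delta> l"
    using transversal_nonempty unfolding typed_partition_def by auto
  show "disjnt B B'"
    if B: "B \<in> typed_partition p \<delta> l" and B': "B' \<in> typed_partition p \<delta> l" and ne: "B \<noteq> B'" for B B'
  proof -
    obtain D k where D: "D \<in> \<delta>" "k < p" and B_eq: "B = transversal p (\<lambda>j. l j + k) D"
      using B unfolding typed_partition_def by auto
    obtain D' k' where D': "D' \<in> \<delta>" "k' < p" and B'_eq: "B' = transversal p (\<lambda>j. l j + k') D'"
      using B' unfolding typed_partition_def by auto
    show ?thesis
      using transversals_meet[OF D(1) D'(1) D(2) D'(2)] ne unfolding B_eq B'_eq disjnt_def by blast
  qed
qed

lemma card_typed_partition: "card (typed_partition p \<delta> l) = card \<delta> * p"
proof -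
  have "inj_on (\<lambda>(D, k). transversal p (\<lambda>j. l j + k) D) (\<delta> \<times> {..<p})"
  proof (rule inj_onI, clarify)
    fix D k D' k' assume D: "D \<in> \<delta>" and k: "k < p" and D': "D' \<in> \<delta>" and k': "k' < p"
      and eq: "transversal p (\<lambda>j. l j + k) D = transversal p (\<lambda>j. l j + k') D'"
    obtain x where x: "x \<in> transversal p (\<lambda>j. l j + k) D"
      using transversal_nonempty \<open>D \<in> \<delta>\<close> by blast
    moreover from x have "x \<in> transversal p (\<lambda>j. l j + k') D'" by (simp only: eq)
    ultimately show "D = D' \<and> k = k'" by (rule transversals_meet[OF D D' k k'])
  qed
  then show ?thesis by (simp add: typed_partition_def card_image card_cartesian_product)
qed

lemma typed_partition_fixedR: "fixedR p a s (typed_partition p \<delta> l)"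
  unfolding fixedR_def Rgrp_eq[OF p]
proof clarify
  fix k
  have "block_shifted p \<delta> (\<lambda>j. k + l j) l"
    unfolding block_shifted_def by (intro ballI exI[of _ k]) (simp add: add.commute)
  then show "set_act (orbit_rot p (a * s) (\<lambda>_. k)) (typed_partition p \<delta> l) = typed_partition p \<delta> l"
    by (simp add: set_act_typed_partition typed_partition_eq_iff)
qed

lemma transversal_Int_Orb:
  assumes "D \<in> \<delta>" "j \<in> {1..a * s}"
  shows "transversal p l D \<inter> Orb p j = (if j \<in> D then {orbit_point p j (l j)} else {})"
proof (intro equalityI subsetI)
  fix x assume "x \<in> transversal p l D \<inter> Orb p j"
  moreover from this obtain r where "x = orbit_point p j r" using assms(2) Orb_eq[OF p] by auto
  ultimately show "x \<in> (if j \<in> D then {orbit_point p j (l j)} else {})"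
    using assms mem_transversal[OF assms(1)] by (auto intro: orbit_point_cong)
next
  fix x assume "x \<in> (if j \<in> D then {orbit_point p j (l j)} else {})"
  then show "x \<in> transversal p l D \<inter> Orb p j"
    using assms Orb_eq[OF p] by (auto split: if_splits simp: transversal_def)
qed

lemma typed_partition_has_type: "has_type p a s \<delta> (typed_partition p \<delta> l)"
  unfolding has_type_def
proof (intro exI conjI)
  show "\<forall>D\<in>\<delta>. \<forall>j\<in>{1..a * s}. card (transversal p l D \<inter> Orb p j) = (if j \<in> D then 1 else 0)"
    by (simp add: transversal_Int_Orb)
qed (rule typed_partition_alt)

lemma mem_rot_coset:
  "h \<in> rot_coset p (a * s) \<delta> l \<longleftrightarrow> (\<exists>w\<in>block_const p \<delta>. h = orbit_rot p (a * s) (\<lambda>j. l j + w j))"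
  unfolding rot_coset_def image_image orbit_rot_comp[OF p] by blast

lemma coset_act_rot_coset:
  "coset_act (orbit_rot p (a * s) c) (rot_coset p (a * s) \<delta> l) = rot_coset p (a * s) \<delta> (\<lambda>j. c j + l j)"
  unfolding coset_act_def rot_coset_def image_image
  by (simp add: comp_assoc orbit_rot_comp[OF p] add.assoc flip: comp_assoc)

lemma cosets_block_const:
  "cosets (range (orbit_rot p (a * s))) (orbit_rot p (a * s) ` block_const p \<delta>) = range (rot_coset p (a * s) \<delta>)"
  unfolding cosets_def rot_coset_def by blast

lemma rot_coset_mono:
  assumes "block_shifted p \<delta> l l'"
  shows "rot_coset p (a * s) \<delta> l \<subseteq> rot_coset p (a * s) \<delta> l'"
proof
  obtain K where K: "\<forall>D\<in>\<delta>. \<forall>j\<in>D. [l j = l' j + K D] (mod p)"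
    using bchoice[OF assms[unfolded block_shifted_def]] by blast
  fix h assume "h \<in> rot_coset p (a * s) \<delta> l"
  then obtain w where w: "w \<in> block_const p \<delta>" and h: "h = orbit_rot p (a * s) (\<lambda>j. l j + w j)"
    unfolding mem_rot_coset by blast
  define w' where "w' j = w j + K (block_of \<delta> j)" for j
  have "w' \<in> block_const p \<delta>"
    using w unfolding block_const_def w'_def by (auto simp: block_of_eq[OF P] intro: cong_add)
  moreover have "orbit_rot p (a * s) (\<lambda>j. l j + w j) = orbit_rot p (a * s) (\<lambda>j. l' j + w' j)"
  proof (subst orbit_rot_eq_iff[OF p], intro ballI)
    fix j assume "j \<in> {1..a * s}"
    then have "[l j = l' j + K (block_of \<delta> j)] (mod p)" using K block_of_in[OF P] by blast
    then have "[l j + w j = l' j + K (block_of \<delta> j) + w j] (mod p)" by (rule cong_add) simp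
    then show "[l j + w j = l' j + w' j] (mod p)" by (simp add: w'_def ac_simps)
  qed
  ultimately show "h \<in> rot_coset p (a * s) \<delta> l'"
    unfolding h mem_rot_coset by blast
qed

lemma rot_coset_eq_iff: "rot_coset p (a * s) \<delta> l = rot_coset p (a * s) \<delta> l' \<longleftrightarrow> block_shifted p \<delta> l l'"
proof
  assume eq: "rot_coset p (a * s) \<delta> l = rot_coset p (a * s) \<delta> l'"
  have "(\<lambda>_. 0) \<in> block_const p \<delta>" by (simp add: block_const_def)
  then have "orbit_rot p (a * s) l \<in> rot_coset p (a * s) \<delta> l"
    unfolding mem_rot_coset by force
  then obtain w where w: "w \<in> block_const p \<delta>"
    and lw: "orbit_rot p (a * s) l = orbit_rot p (a * s) (\<lambda>j. l' j + w j)"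
    unfolding eq mem_rot_coset by blast
  show "block_shifted p \<delta> l l'" unfolding block_shifted_def
  proof
    fix D assume D: "D \<in> \<delta>"
    obtain j\<^sub>0 where j\<^sub>0: "j\<^sub>0 \<in> D" using partition_onD3[OF P] D by fastforce
    have "[l j = l' j + w j\<^sub>0] (mod p)" if j: "j \<in> D" for j
    proof -
      have "j \<in> {1..a * s}" using j block_subset[OF D] by blast
      then have "[l j = l' j + w j] (mod p)" using lw unfolding orbit_rot_eq_iff[OF p] by blast
      moreover have "[w j = w j\<^sub>0] (mod p)" using w D j j\<^sub>0 unfolding block_const_def by blast
      ultimately show ?thesis using cong_add_lcancel_nat cong_trans by blast
    qed
    then show "\<exists>k. \<forall>j\<in>D. [l j = l' j + k] (mod p)" by blast
  qed
qed (use rot_coset_mono block_shifted_sym[OF p] in blast)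

context
  assumes card_block: "\<forall>D\<in>\<delta>. card D = a" and card_\<delta>: "card \<delta> = s"
begin

lemma typed_partition_in_Xdelta: "typed_partition p \<delta> l \<in> Xdelta p a s \<delta>"
proof -
  have "\<forall>B\<in>typed_partition p \<delta> l. card B = a"
    using card_block card_transversal unfolding typed_partition_def by auto
  then have "typed_partition p \<delta> l \<in> setparts (a * s * p) (s * p) a"
    using typed_partition_partition_on card_typed_partition card_\<delta>
    by (simp add: setparts_def mult.commute)
  then show ?thesis
    by (simp add: Xdelta_def typed_partition_fixedR typed_partition_has_type)
qed

lemma Xdelta_subset_typed_partitions:
  assumes "\<omega> \<in> Xdelta p a s \<delta>"
  shows "\<omega> \<in> range (typed_partition p \<delta>)"
proof -
  obtain A where card_Orb: "\<forall>D\<in>\<delta>. \<forall>j\<in>{1..a * s}. card (A D \<inter> Orb p j) = (if j \<in> D then 1 else 0)"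
    and \<omega>: "\<omega> = {(sigma p a s ^^ k) ` A D | D k. D \<in> \<delta> \<and> k < p}"
    using assms unfolding Xdelta_def has_type_def by blast
  have "\<Union>\<omega> = {1..p * (a * s)}"
    using assms unfolding Xdelta_def setparts_def partition_on_def by (simp add: mult.commute)
  moreover have "A D \<in> \<omega>" if "D \<in> \<delta>" for D
  proof -
    have "(sigma p a s ^^ 0) ` A D \<in> \<omega>" unfolding \<omega> using that p by blast
    then show ?thesis by simp
  qed
  ultimately have A_sub: "A D \<subseteq> {1..p * (a * s)}" if "D \<in> \<delta>" for D
    using that by blast
  define l where "l j = orbit_residue p (the_elem (A (block_of \<delta> j) \<inter> Orb p j))" for j
  have A_eq: "A D = transversal p l D" if D: "D \<in> \<delta>" for D
  proof -
    have "A D = transversal p (\<lambda>j. orbit_residue p (the_elem (A D \<inter> Orb p j))) D"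
      using eq_transversal_if_card_Orb[OF p A_sub[OF D] block_subset[OF D]] card_Orb D by blast
    also have "\<dots> = transversal p l D"
      unfolding transversal_def l_def using block_of_eq[OF P D] by simp
    finally show ?thesis .
  qed
  have "\<omega> = typed_partition p \<delta> l"
    unfolding \<omega> typed_partition_alt using A_eq by blast
  then show ?thesis by blast
qed

lemma Xdelta_eq: "Xdelta p a s \<delta> = range (typed_partition p \<delta>)"
  using typed_partition_in_Xdelta Xdelta_subset_typed_partitions by blast

lemma typed_partitions_iso_rot_cosets:
  "FG_iso TYPE('F::field) (range (orbit_rot p (a * s))) set_act (Xdelta p a s \<delta>)
     coset_act (range (rot_coset p (a * s) \<delta>))"
  unfolding Xdelta_eq
proof (rule FG_iso_of_parametrisations[where A = UNIV])
  show "typed_partition p \<delta> l = typed_partition p \<delta> l' \<longleftrightarrow> rot_coset p (a * s) \<delta> l = rot_coset p (a * s) \<delta> l'"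
    for l l' by (simp add: typed_partition_eq_iff rot_coset_eq_iff)
  show "\<exists>l'\<in>UNIV. set_act g (typed_partition p \<delta> l) = typed_partition p \<delta> l'
      \<and> coset_act g (rot_coset p (a * s) \<delta> l) = rot_coset p (a * s) \<delta> l'"
    if g: "g \<in> range (orbit_rot p (a * s))" for g l
  proof -
    obtain c where "g = orbit_rot p (a * s) c" using g by blast
    then show ?thesis
      by (intro bexI[of _ "\<lambda>j. c j + l j"]) (simp_all add: set_act_typed_partition coset_act_rot_coset)
  qed
qed simp_all

end

end

theorem proposition3p5:
  fixes p a s :: nat and \<delta> :: "nat set set"
  assumes "prime p" and "odd p" and "CHAR('F::field) = p" and "a < p"
    and "partition_on {1..a*s} \<delta>" and "\<forall>D\<in>\<delta>. card D = a" and "card \<delta> = s"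
  shows "\<exists>g\<in>Normaliser p a s.
           conjg g (Egrp p a s) \<subseteq> Cgrp p a s \<and>
           FG_iso TYPE('F) (Cgrp p a s) set_act (Xdelta p a s \<delta>)
                  coset_act (cosets (Cgrp p a s) (conjg g (Egrp p a s)))"
proof -
  have p: "0 < p" using \<open>prime p\<close> prime_gt_0_nat by blast
  obtain \<tau> where \<tau>: "bij_betw \<tau> {1..a * s} {1..a * s}"
    and labelling: "\<forall>i\<in>{1..a * s}. \<forall>i'\<in>{1..a * s}.
           (\<tau> i - 1) mod s = (\<tau> i' - 1) mod s \<longleftrightarrow> block_of \<delta> i = block_of \<delta> i'"
    by (rule obtain_block_labelling[OF assms(5-7)])
  let ?g = "orbit_perm p (a * s) \<tau>"
  have E: "conjg ?g (Egrp p a s) = orbit_rot p (a * s) ` block_const p \<delta>"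
    by (rule conjg_Egrp_block_const[OF p assms(5) \<tau> labelling])
  have "FG_iso TYPE('F) (Cgrp p a s) set_act (Xdelta p a s \<delta>)
          coset_act (cosets (Cgrp p a s) (conjg ?g (Egrp p a s)))"
    unfolding E Cgrp_eq[OF p] cosets_block_const[OF p assms(5)]
    by (rule typed_partitions_iso_rot_cosets[OF p assms(5-7)])
  moreover have "conjg ?g (Egrp p a s) \<subseteq> Cgrp p a s" unfolding E Cgrp_eq[OF p] by blast
  ultimately show ?thesis using orbit_perm_normalises_Rgrp[OF p \<tau>] by blast
qed

end
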